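(* Let $p\geq 5$ be a prime and let $r$ be an integer with $1\leq r\leq p-1$ such that $3r+1$ is a quadratic nonresidue modulo $p$. Then for all $n\geq 0$, $d_7(2pn+2r+1)\equiv 0\pmod 4$.
   Context: For each integer $k\geq 1$, the numbers $d_k(n)$ are defined by $\sum_{n\geq 0} d_k(n)q^n = \frac{f_2^k}{f_1^{3k+1}}$, where $f_r = \prod_{i\geq 1}(1-q^{ri})$. *)

theory Defs
  imports "HOL-Computational_Algebra.Computational_Algebra" "HOL-Number_Theory.Number_Theory"
begin

text \<open>f_r = prod_{i>=1} (1 - q^(r i)) as a formal power series over the rationals.
  The coefficient of q^n is determined by the finite product over i = 1..n
  (factors with i > n only affect degrees > n when r >= 1).\<close>
definition f_fps :: "nat \<Rightarrow> rat fps" where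
  "f_fps r = Abs_fps (\<lambda>n. fps_nth (\<Prod>i\<in>{1..n}. (1 - fps_X ^ (r * i))) n)"

definition d :: "nat \<Rightarrow> nat \<Rightarrow> rat" where
  "d k n = fps_nth (f_fps 2 ^ k * inverse (f_fps 1 ^ (3 * k + 1))) n"

end

theory Submission
  imports Defs
begin

(* Write f_r for f_fps r.  The Jacobi triple product identity is proved as an identity of formal
   power series by letting n tend to infinity in its finite form, which is the q-binomial theorem in
   disguise.  Three instances give Gauss' identity f_1^2 = phi f_2 with phi = sum_s (-1)^s q^(s^2),
   the identity theta f_8 = 2 f_16^2 with theta = sum_s q^(4 s (s - 1)), and Euler's pentagonal
   number theorem f_16 = sum_s (-1)^s q^(8 s (3 s - 1)).

   Modulo 2 we have f_r^2 == f_2r; hence f_1^4 == f_2^2 (mod 4) and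
   d_7 = f_2^7 / f_1^22 == f_1^2 / f_2^5 = phi / f_2^4 (mod 4).  The odd part of phi is -q theta
   and f_2 is even, so at odd indices phi / f_2^4 agrees with
   -q theta / f_2^4 = -2 q f_16^2 / (f_8 f_2^4) == -2 q f_16 (mod 4).  Thus
   d_7(2M + 1) == -2 [q^(2M)] f_16 (mod 4), which vanishes unless M = 4 s (3 s - 1), i.e. unless
   3M + 1 = (6 s - 1)^2.  For M = p n + r this would make 3 r + 1 a quadratic residue modulo p. *)

lemma fps_nth_eq_if_X_power_dvd_diff:
  fixes A B :: "'a::comm_ring_1 fps"
  assumes "fps_X ^ Suc j dvd A - B"
  shows "A $ j = B $ j"
proof -
  obtain C where "A - B = fps_X ^ Suc j * C"
    using assms by (elim dvdE)
  hence "(A - B) $ j = 0"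
    by (simp add: fps_X_power_mult_nth del: power_Suc)
  thus ?thesis by simp
qed

lemma dvd_prod_diff_one:
  fixes f :: "'b \<Rightarrow> 'a::comm_ring_1"
  assumes "\<And>i. i \<in> S \<Longrightarrow> c dvd f i - 1"
  shows "c dvd prod f S - 1"
  using assms
proof (induction S rule: infinite_finite_induct)
  case (insert i S)
  have "prod f (insert i S) - 1 = (f i - 1) * prod f S + (prod f S - 1)"
    using insert.hyps by (simp add: algebra_simps)
  also have "c dvd \<dots>"
    using insert by (intro dvd_add dvd_mult2) auto
  finally show ?case .
qed auto

lemma tendsto_fps_mult:
  fixes F G :: "'a::comm_ring_1 fps"
  assumes "(f \<longlongrightarrow> F) net" "(g \<longlongrightarrow> G) net"
  shows "((\<lambda>x. f x * g x) \<longlongrightarrow> F * G) net"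
proof (rule tendsto_fpsI)
  fix n
  have "eventually (\<lambda>x. \<forall>k\<in>{..n}. f x $ k = F $ k \<and> g x $ k = G $ k) net"
    using assms by (subst eventually_ball_finite_distrib) (auto simp: tendsto_fps_iff intro: eventually_conj)
  thus "eventually (\<lambda>x. (f x * g x) $ n = (F * G) $ n) net"
    by eventually_elim (auto simp: fps_mult_nth intro!: sum.cong)
qed

lemma tendsto_fps_power:
  fixes F :: "'a::comm_ring_1 fps"
  shows "(f \<longlongrightarrow> F) net \<Longrightarrow> ((\<lambda>x. f x ^ m) \<longlongrightarrow> F ^ m) net"
proof (induction m)
  case (Suc m)
  thus ?case using tendsto_fps_mult[OF \<open>(f \<longlongrightarrow> F) net\<close> Suc.IH] by simp
qed simp

lemma fps_inverse_nth_Suc: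
  fixes A :: "'a::field fps"
  shows "inverse A $ Suc m = - inverse (A $ 0) * (\<Sum>i=1..Suc m. A $ i * inverse A $ (Suc m - i))"
  by (simp add: fps_inverse_def)

definition fps_even :: "'a::comm_ring_1 fps \<Rightarrow> bool" where
  "fps_even A \<longleftrightarrow> (\<forall>n. odd n \<longrightarrow> A $ n = 0)"

lemma fps_even_mult:
  assumes "fps_even A" "fps_even B"
  shows "fps_even (A * B)"
  unfolding fps_even_def
proof (intro allI impI)
  fix n :: nat
  assume n: "odd n"
  have "A $ i * B $ (n - i) = 0" if "i \<in> {0..n}" for i
  proof -
    have "odd i \<or> odd (n - i)"
      using n that by auto
    thus ?thesis
      by (elim disjE) (simp_all add: assms[unfolded fps_even_def])
  qed
  thus "(A * B) $ n = 0"
    unfolding fps_mult_nth by (intro sum.neutral ballI)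
qed

lemma fps_even_one [simp]: "fps_even 1"
  by (auto simp: fps_even_def)

lemma fps_even_power: "fps_even A \<Longrightarrow> fps_even (A ^ m)"
  by (induction m) (auto intro: fps_even_mult)

lemma fps_even_prod: "(\<And>i. i \<in> S \<Longrightarrow> fps_even (f i)) \<Longrightarrow> fps_even (prod f S)"
  by (induction S rule: infinite_finite_induct) (auto intro: fps_even_mult)

lemma fps_even_inverse:
  fixes A :: "'a::field fps"
  assumes "fps_even A"
  shows "fps_even (inverse A)"
  unfolding fps_even_def
proof (intro allI impI)
  fix n :: nat
  assume "odd n"
  thus "inverse A $ n = 0"
  proof (induction n rule: less_induct)
    case (less n)
    then obtain m where n: "n = Suc m"
      by (cases n) auto
    have "A $ i * inverse A $ (n - i) = 0" if "i \<in> {1..n}" for i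
      using that less assms by (cases "odd i") (auto simp: fps_even_def)
    hence "(\<Sum>i=1..n. A $ i * inverse A $ (n - i)) = 0"
      by (intro sum.neutral ballI)
    thus ?case
      by (simp only: n fps_inverse_nth_Suc) simp
  qed
qed

section \<open>Congruences between power series with integral coefficients\<close>

definition integral_fps :: "'a::comm_ring_1 fps \<Rightarrow> bool" where
  "integral_fps A \<longleftrightarrow> (\<forall>n. A $ n \<in> \<int>)"

lemma integral_fps_one [simp]: "integral_fps 1"
  by (simp add: integral_fps_def)

lemma integral_fps_X_power [simp]: "integral_fps (fps_X ^ k)"
  by (simp add: integral_fps_def)

lemma integral_fps_X [simp]: "integral_fps fps_X"
  using integral_fps_X_power[of 1] by simp

lemma integral_fps_add [intro]: "integral_fps A \<Longrightarrow> integral_fps B \<Longrightarrow> integral_fps (A + B)"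
  by (simp add: integral_fps_def)

lemma integral_fps_diff [intro]: "integral_fps A \<Longrightarrow> integral_fps B \<Longrightarrow> integral_fps (A - B)"
  by (simp add: integral_fps_def)

lemma integral_fps_uminus [intro]: "integral_fps A \<Longrightarrow> integral_fps (- A)"
  by (simp add: integral_fps_def)

lemma integral_fps_mult [intro]:
  "integral_fps A \<Longrightarrow> integral_fps B \<Longrightarrow> integral_fps (A * B)"
  by (auto simp: integral_fps_def fps_mult_nth intro!: Ints_sum Ints_mult)

lemma integral_fps_power [intro]: "integral_fps A \<Longrightarrow> integral_fps (A ^ m)"
  by (induction m) auto

lemma integral_fps_prod [intro]:
  "(\<And>i. i \<in> S \<Longrightarrow> integral_fps (f i)) \<Longrightarrow> integral_fps (prod f S)"
  by (induction S rule: infinite_finite_induct) auto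

lemma integral_fps_inverse:
  fixes A :: "'a::field fps"
  assumes "integral_fps A" "A $ 0 = 1"
  shows "integral_fps (inverse A)"
  unfolding integral_fps_def
proof
  fix n
  show "inverse A $ n \<in> \<int>"
  proof (induction n rule: less_induct)
    case (less n)
    show ?case
    proof (cases n)
      case 0
      thus ?thesis using assms by simp
    next
      case (Suc m)
      have "A $ i * inverse A $ (n - i) \<in> \<int>" if "i \<in> {1..n}" for i
        using that less assms(1) by (intro Ints_mult) (auto simp: integral_fps_def)
      hence "- (\<Sum>i=1..n. A $ i * inverse A $ (n - i)) \<in> \<int>"
        by (intro Ints_minus Ints_sum)
      thus ?thesis
        using assms(2) by (simp only: Suc fps_inverse_nth_Suc) simp
    qed
  qed
qed

definition fps_cong :: "int \<Rightarrow> 'a::comm_ring_1 fps \<Rightarrow> 'a fps \<Rightarrow> bool" where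
  "fps_cong m A B \<longleftrightarrow> (\<exists>C. integral_fps C \<and> A - B = of_int m * C)"

lemma fps_congI: "integral_fps C \<Longrightarrow> A = B + of_int m * C \<Longrightarrow> fps_cong m A B"
  by (auto simp: fps_cong_def)

lemma fps_congE:
  assumes "fps_cong m A B"
  obtains C where "integral_fps C" "A = B + of_int m * C"
  using assms by (auto simp: fps_cong_def algebra_simps)

lemma fps_cong_refl [simp]: "fps_cong m A A"
  by (rule fps_congI[of 0]) (auto simp: integral_fps_def)

lemma fps_cong_sym:
  assumes "fps_cong m A B"
  shows "fps_cong m B A"
proof -
  obtain C where "integral_fps C" "A = B + of_int m * C"
    using assms by (elim fps_congE)
  thus ?thesis
    by (intro fps_congI[of "- C"]) auto
qed

lemma fps_cong_trans:
  assumes "fps_cong m A B" "fps_cong m B C"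
  shows "fps_cong m A C"
proof -
  obtain D E where "integral_fps D" "A = B + of_int m * D" "integral_fps E" "B = C + of_int m * E"
    using assms by (elim fps_congE)
  thus ?thesis
    by (intro fps_congI[of "D + E"]) (auto simp: algebra_simps)
qed

lemma fps_cong_diff:
  assumes "fps_cong m A B" "fps_cong m C D"
  shows "fps_cong m (A - C) (B - D)"
proof -
  obtain E F where "integral_fps E" "A = B + of_int m * E" "integral_fps F" "C = D + of_int m * F"
    using assms by (elim fps_congE)
  thus ?thesis
    by (intro fps_congI[of "E - F"]) (auto simp: algebra_simps)
qed

lemma fps_cong_mult_left:
  assumes "integral_fps C" "fps_cong m A B"
  shows "fps_cong m (C * A) (C * B)"
proof -
  obtain E where "integral_fps E" "A = B + of_int m * E"
    using assms(2) by (elim fps_congE)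
  thus ?thesis
    using assms(1) by (intro fps_congI[of "C * E"]) (auto simp: algebra_simps)
qed

lemma fps_cong_mult:
  assumes "fps_cong m A B" "fps_cong m C D" "integral_fps A" "integral_fps D"
  shows "fps_cong m (A * C) (B * D)"
proof -
  have "fps_cong m (A * C) (A * D)"
    using assms by (intro fps_cong_mult_left)
  moreover have "fps_cong m (D * A) (D * B)"
    using assms by (intro fps_cong_mult_left)
  ultimately show ?thesis
    by (auto simp: mult.commute[of D] intro: fps_cong_trans)
qed

lemma fps_cong_power:
  assumes "fps_cong m A B" "integral_fps A" "integral_fps B"
  shows "fps_cong m (A ^ k) (B ^ k)"
proof (induction k)
  case (Suc k)
  thus ?case
    using assms by (simp add: fps_cong_mult integral_fps_power)
qed simp

lemma fps_cong_prod:
  assumes "\<And>i. i \<in> S \<Longrightarrow> fps_cong m (f i) (g i) \<and> integral_fps (f i) \<and> integral_fps (g i)"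
  shows "fps_cong m (prod f S) (prod g S)"
  using assms
proof (induction S rule: infinite_finite_induct)
  case (insert i S)
  thus ?case
    by (simp add: fps_cong_mult integral_fps_prod)
qed simp_all

lemma fps_cong_scale: "fps_cong m A B \<Longrightarrow> fps_cong (c * m) (of_int c * A) (of_int c * B)"
  by (elim fps_congE, rule fps_congI) (auto simp: algebra_simps)

lemma fps_cong_square:
  assumes "fps_cong 2 A B" "integral_fps B"
  shows "fps_cong 4 (A ^ 2) (B ^ 2)"
proof -
  obtain C where "integral_fps C" "A = B + 2 * C"
    using assms(1) by (elim fps_congE) simp
  thus ?thesis
    using assms(2) by (intro fps_congI[of "B * C + C ^ 2"]) (auto simp: power2_eq_square algebra_simps)
qed

lemma fps_cong_inverse:
  fixes A B :: "'a::field fps"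
  assumes "fps_cong m A B" "integral_fps A" "integral_fps B" "A $ 0 = 1" "B $ 0 = 1"
  shows "fps_cong m (inverse A) (inverse B)"
proof -
  obtain C where C: "integral_fps C" "A = B + of_int m * C"
    using assms(1) by (elim fps_congE)
  have "inverse A - inverse B = inverse A * (B - A) * inverse B"
    using assms(4,5) by (simp add: algebra_simps inverse_mult_eq_1 inverse_mult_eq_1')
  also have "\<dots> = of_int m * (- (inverse A * C * inverse B))"
    using C(2) by (simp add: algebra_simps)
  finally have "inverse A = inverse B + of_int m * (- (inverse A * C * inverse B))"
    by (simp add: algebra_simps)
  thus ?thesis
    using assms C(1) by (intro fps_congI[of "- (inverse A * C * inverse B)"])
      (auto intro!: integral_fps_inverse)
qed

lemma fps_cong_cancel:
  fixes A B C :: "'a::field fps"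
  assumes "fps_cong m (A * C) (B * C)" "integral_fps C" "C $ 0 = 1"
  shows "fps_cong m A B"
proof -
  have "fps_cong m (inverse C * (A * C)) (inverse C * (B * C))"
    using assms by (intro fps_cong_mult_left integral_fps_inverse)
  thus ?thesis
    using assms(3) by (simp add: mult.assoc mult.left_commute[of "inverse C"] inverse_mult_eq_1)
qed

lemma fps_cong_nth:
  assumes "fps_cong m A B"
  shows "\<exists>z::int. A $ n = B $ n + of_int m * of_int z"
proof -
  obtain C where "integral_fps C" "A = B + of_int m * C"
    using assms by (elim fps_congE)
  moreover from this obtain z where "C $ n = of_int z"
    by (auto simp: integral_fps_def elim: Ints_cases)
  ultimately show ?thesis
    by (auto simp flip: fps_of_int)
qed

lemma fps_cong_limit:
  fixes A B :: "nat \<Rightarrow> 'a::field_char_0 fps"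
  assumes "A \<longlonglongrightarrow> A'" "B \<longlonglongrightarrow> B'" "\<And>n. fps_cong m (A n) (B n)" "m \<noteq> 0"
  shows "fps_cong m A' B'"
proof (rule fps_congI)
  define C where "C = fps_const (inverse (of_int m)) * (A' - B')"
  show "A' = B' + of_int m * C"
    using assms(4) by (simp add: C_def fps_of_int[symmetric] algebra_simps fps_const_mult[symmetric])
  show "integral_fps C"
    unfolding integral_fps_def
  proof
    fix j
    have "eventually (\<lambda>n. A n $ j = A' $ j \<and> B n $ j = B' $ j) sequentially"
      using assms(1,2) by (auto simp: tendsto_fps_iff intro: eventually_conj)
    then obtain n where "A n $ j = A' $ j" "B n $ j = B' $ j"
      unfolding eventually_sequentially by blast
    moreover obtain z where "A n $ j = B n $ j + of_int m * of_int z"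
      using fps_cong_nth[OF assms(3)] by blast
    ultimately have "A' $ j - B' $ j = of_int m * of_int z"
      by (metis add_diff_cancel_left')
    hence "C $ j = of_int z"
      using assms(4) by (simp add: C_def)
    thus "C $ j \<in> \<int>"
      by simp
  qed
qed

section \<open>q-Pochhammer symbols and the products f_r\<close>

definition q_pochhammer :: "'a::comm_ring_1 \<Rightarrow> nat \<Rightarrow> 'a" where
  "q_pochhammer x n = (\<Prod>i<n. 1 - x ^ Suc i)"

lemma q_pochhammer_0 [simp]: "q_pochhammer x 0 = 1"
  by (simp add: q_pochhammer_def)

lemma q_pochhammer_Suc: "q_pochhammer x (Suc n) = q_pochhammer x n * (1 - x ^ Suc n)"
  by (simp add: q_pochhammer_def)

lemma q_pochhammer_split:
  "l \<le> u \<Longrightarrow> q_pochhammer x u = q_pochhammer x l * (\<Prod>i\<in>{l..<u}. 1 - x ^ Suc i)"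
  unfolding q_pochhammer_def lessThan_atLeast0 by (simp add: prod.atLeastLessThan_concat)

lemma prod_lessThan_add: "(\<Prod>i<n + m. f i) = (\<Prod>i<n. f i) * (\<Prod>i<m. f (n + i))"
  for f :: "nat \<Rightarrow> 'a::comm_monoid_mult"
  by (induction m) (simp_all add: mult_ac)

lemma q_pochhammer_add: "q_pochhammer x (m + n) = q_pochhammer x m * (\<Prod>j<n. 1 - x ^ (m + Suc j))"
  by (simp add: q_pochhammer_def prod_lessThan_add)

lemma q_pochhammer_multisection:
  "q_pochhammer x (Suc m * n) = (\<Prod>i<n. \<Prod>r<m. 1 - x ^ (Suc m * i + Suc r)) * q_pochhammer (x ^ Suc m) n"
proof (induction n)
  case (Suc n)
  have pow: "(x ^ Suc m) ^ Suc n = x ^ (Suc m * n + Suc m)"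
    by (simp only: power_mult[symmetric] mult_Suc_right add.commute)
  have "q_pochhammer x (Suc m * Suc n) = q_pochhammer x (Suc m * n + Suc m)"
    by (simp add: algebra_simps)
  also have "\<dots> = q_pochhammer x (Suc m * n) * (\<Prod>j<Suc m. 1 - x ^ (Suc m * n + Suc j))"
    by (rule q_pochhammer_add)
  also have "\<dots> = q_pochhammer x (Suc m * n) * (\<Prod>r<m. 1 - x ^ (Suc m * n + Suc r)) *
                   (1 - (x ^ Suc m) ^ Suc n)"
    unfolding pow by (simp only: prod.lessThan_Suc mult.assoc)
  also have "\<dots> = (\<Prod>i<Suc n. \<Prod>r<m. 1 - x ^ (Suc m * i + Suc r)) * q_pochhammer (x ^ Suc m) (Suc n)"
    unfolding Suc.IH by (simp only: prod.lessThan_Suc q_pochhammer_Suc mult_ac)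
  finally show ?case .
qed simp

lemma q_pochhammer_square: "q_pochhammer (x ^ 2) n = (\<Prod>i<n. 1 + x ^ Suc i) * q_pochhammer x n"
  by (simp add: q_pochhammer_def prod.distrib[symmetric] power_mult_distrib algebra_simps
           flip: power_mult power2_eq_square)

lemma q_pochhammer_X_power_nth_0 [simp]:
  "0 < a \<Longrightarrow> q_pochhammer (fps_X ^ a :: 'a::comm_ring_1 fps) n $ 0 = 1"
  by (induction n) (simp_all add: q_pochhammer_Suc flip: power_mult)

lemma X_power_dvd_prod_one_minus_diff_one:
  assumes "0 < a" "m \<le> l"
  shows "fps_X ^ Suc m dvd (\<Prod>i\<in>{l..<u}. 1 - (fps_X ^ a :: 'a::comm_ring_1 fps) ^ Suc i) - 1"
proof (rule dvd_prod_diff_one)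
  fix i
  assume "i \<in> {l..<u}"
  moreover have "Suc i \<le> a * Suc i"
    using mult_le_mono1[of 1 a "Suc i"] assms(1) by simp
  ultimately have "Suc m \<le> a * Suc i"
    using assms(2) by simp
  hence "fps_X ^ Suc m dvd (fps_X ^ a :: 'a fps) ^ Suc i"
    by (simp only: power_mult[symmetric]) (rule le_imp_power_dvd)
  thus "fps_X ^ Suc m dvd (1 - (fps_X ^ a :: 'a fps) ^ Suc i) - 1"
    by simp
qed

lemma q_pochhammer_X_power_nth_eq:
  assumes "0 < a" "j \<le> n"
  shows "q_pochhammer (fps_X ^ a :: 'a::comm_ring_1 fps) n $ j = q_pochhammer (fps_X ^ a) j $ j"
proof (rule fps_nth_eq_if_X_power_dvd_diff)
  let ?T = "\<Prod>i\<in>{j..<n}. 1 - (fps_X ^ a :: 'a fps) ^ Suc i"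
  have "q_pochhammer (fps_X ^ a) n - q_pochhammer (fps_X ^ a) j = q_pochhammer (fps_X ^ a) j * (?T - 1)"
    using assms(2) by (simp add: q_pochhammer_split[of j n] algebra_simps)
  also have "fps_X ^ Suc j dvd \<dots>"
    by (intro dvd_mult X_power_dvd_prod_one_minus_diff_one assms(1) order_refl)
  finally show "fps_X ^ Suc j dvd q_pochhammer (fps_X ^ a :: 'a fps) n - q_pochhammer (fps_X ^ a) j" .
qed

lemma f_fps_nth: "0 < r \<Longrightarrow> f_fps r $ j = q_pochhammer (fps_X ^ r) j $ j"
  by (simp add: f_fps_def q_pochhammer_def prod.atLeast1_atMost_eq power_mult)

lemma f_fps_nth_0 [simp]: "f_fps r $ 0 = 1"
  by (simp add: f_fps_def)

lemma tendsto_f_fps: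
  assumes "0 < r"
  shows "(\<lambda>n. q_pochhammer (fps_X ^ r) n) \<longlonglongrightarrow> f_fps r"
proof (rule tendsto_fpsI)
  fix j
  show "eventually (\<lambda>n. q_pochhammer (fps_X ^ r) n $ j = f_fps r $ j) at_top"
    using eventually_ge_at_top[of j]
    by eventually_elim (subst f_fps_nth[OF assms], rule q_pochhammer_X_power_nth_eq[OF assms])
qed

lemma tendsto_f_fps_subseq:
  assumes "0 < r"
  shows "(\<lambda>n. q_pochhammer (fps_X ^ r) (Suc m * n)) \<longlonglongrightarrow> f_fps r"
proof -
  have "strict_mono (\<lambda>n. Suc m * n)"
    by (intro strict_monoI) (auto intro!: add_less_le_mono)
  from LIMSEQ_subseq_LIMSEQ[OF tendsto_f_fps[OF assms] this] show ?thesis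
    by (simp add: o_def)
qed

lemma integral_fps_f_fps [simp]: "integral_fps (f_fps r)"
proof -
  have "integral_fps (\<Prod>i\<in>{1..n}. 1 - fps_X ^ (r * i) :: rat fps)" for n
    by (intro integral_fps_prod integral_fps_diff) simp_all
  thus ?thesis
    by (simp add: integral_fps_def f_fps_def)
qed

lemma fps_even_f_fps: "fps_even (f_fps (2 * r))"
proof -
  have "fps_even (\<Prod>i\<in>{1..n}. 1 - fps_X ^ (2 * r * i) :: rat fps)" for n
    by (intro fps_even_prod) (auto simp: fps_even_def)
  thus ?thesis
    by (simp add: fps_even_def f_fps_def)
qed

lemma f_fps_square_cong:
  assumes "0 < r"
  shows "fps_cong 2 (f_fps r ^ 2) (f_fps (2 * r))"
proof -
  let ?x = "fps_X ^ r :: rat fps"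
  have factor: "fps_cong 2 ((1 - y) ^ 2) (1 - y ^ 2)" if "integral_fps y" for y :: "rat fps"
    using that by (intro fps_congI[of "y ^ 2 - y"]) (auto simp: power2_eq_square algebra_simps)
  have cong: "fps_cong 2 (q_pochhammer ?x n ^ 2) (q_pochhammer (?x ^ 2) n)" for n
  proof -
    have "q_pochhammer ?x n ^ 2 = (\<Prod>i<n. (1 - ?x ^ Suc i) ^ 2)"
      by (simp add: q_pochhammer_def prod_power_distrib)
    moreover have "(?x ^ 2) ^ Suc i = (?x ^ Suc i) ^ 2" for i
      by (simp only: power_mult[symmetric] mult_ac)
    hence "q_pochhammer (?x ^ 2) n = (\<Prod>i<n. 1 - (?x ^ Suc i) ^ 2)"
      by (simp only: q_pochhammer_def)
    ultimately show ?thesis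
      by (simp only:)
         (intro fps_cong_prod conjI factor integral_fps_diff integral_fps_power integral_fps_one
            integral_fps_X_power)
  qed
  have "(\<lambda>n. q_pochhammer ?x n ^ 2) \<longlonglongrightarrow> f_fps r ^ 2"
    by (intro tendsto_fps_power tendsto_f_fps assms)
  moreover have "(\<lambda>n. q_pochhammer (?x ^ 2) n) \<longlonglongrightarrow> f_fps (2 * r)"
    using tendsto_f_fps[of "2 * r"] assms by (simp add: power_mult mult.commute)
  ultimately show ?thesis
    using cong by (rule fps_cong_limit) simp
qed

section \<open>The q-binomial theorem\<close>

fun q_binomial :: "'a::comm_ring_1 \<Rightarrow> nat \<Rightarrow> nat \<Rightarrow> 'a" where
  "q_binomial x 0 k = (if k = 0 then 1 else 0)"
| "q_binomial x (Suc N) k = x ^ k * q_binomial x N k + (if k = 0 then 0 else q_binomial x N (k - 1))"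

lemma q_binomial_eq_0: "N < k \<Longrightarrow> q_binomial x N k = 0"
  by (induction N arbitrary: k) auto

lemma q_binomial_0_right [simp]: "q_binomial x N 0 = 1"
  by (induction N) auto

lemma q_binomial_self [simp]: "q_binomial x N N = 1"
  by (induction N) (auto simp: q_binomial_eq_0)

lemma Suc_choose_two: "Suc k choose 2 = (k choose 2) + k"
  by (simp add: numeral_2_eq_2)

theorem q_binomial_theorem:
  fixes x y w :: "'a::comm_ring_1"
  shows "(\<Prod>i<N. w + y * x ^ i) = (\<Sum>k\<le>N. q_binomial x N k * x ^ (k choose 2) * y ^ k * w ^ (N - k))"
proof (induction N arbitrary: y)
  case (Suc N)
  define S where "S = (\<Sum>k\<le>N. q_binomial x N k * x ^ (k choose 2) * (y * x) ^ k * w ^ (N - k))"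
  have "(\<Prod>i<Suc N. w + y * x ^ i) = (w + y) * (\<Prod>i<N. w + (y * x) * x ^ i)"
    by (subst prod.lessThan_Suc_shift) (simp add: mult_ac)
  also have "\<dots> = w * S + y * S"
    unfolding Suc.IH S_def by (rule distrib_right)
  also have "w * S = (\<Sum>k\<le>N. x ^ k * q_binomial x N k * x ^ (k choose 2) * y ^ k * w ^ (Suc N - k))"
    unfolding S_def sum_distrib_left
    by (intro sum.cong) (simp_all add: Suc_diff_le power_mult_distrib mult_ac)
  also have "\<dots> = (\<Sum>k\<le>Suc N. x ^ k * q_binomial x N k * x ^ (k choose 2) * y ^ k * w ^ (Suc N - k))"
    by (simp add: q_binomial_eq_0)
  also have "y * S = (\<Sum>k\<le>N. q_binomial x N k * x ^ (Suc k choose 2) * y ^ Suc k * w ^ (Suc N - Suc k))"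
    unfolding S_def sum_distrib_left
    by (intro sum.cong) (simp_all add: Suc_choose_two power_add power_mult_distrib mult_ac)
  also have "\<dots> = (\<Sum>k\<le>Suc N. (if k = 0 then 0 else q_binomial x N (k - 1)) *
                        x ^ (k choose 2) * y ^ k * w ^ (Suc N - k))"
    by (subst sum.atMost_Suc_shift) simp
  also have "(\<Sum>k\<le>Suc N. x ^ k * q_binomial x N k * x ^ (k choose 2) * y ^ k * w ^ (Suc N - k)) +
             (\<Sum>k\<le>Suc N. (if k = 0 then 0 else q_binomial x N (k - 1)) *
                        x ^ (k choose 2) * y ^ k * w ^ (Suc N - k)) =
             (\<Sum>k\<le>Suc N. q_binomial x (Suc N) k * x ^ (k choose 2) * y ^ k * w ^ (Suc N - k))"
    by (simp only: q_binomial.simps(2) distrib_right sum.distrib)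
  finally show ?case .
qed (simp add: numeral_2_eq_2)

lemma q_binomial_mult_q_pochhammer:
  "k \<le> N \<Longrightarrow> q_binomial x N k * q_pochhammer x k * q_pochhammer x (N - k) = q_pochhammer x N"
proof (induction N arbitrary: k)
  case (Suc N)
  show ?case
  proof (cases "k = 0 \<or> k = Suc N")
    case False
    then obtain j where k: "k = Suc j" and j: "j < N"
      using Suc.prems by (cases k) auto
    obtain m where m: "N - j = Suc m"
      using j by (metis Suc_diff_Suc)
    have "N - Suc j = m"
      using m by simp
    hence IH1: "q_binomial x N (Suc j) * q_pochhammer x (Suc j) * q_pochhammer x m = q_pochhammer x N"
      using Suc.IH[of "Suc j"] j by simp
    have IH2: "q_binomial x N j * q_pochhammer x j * q_pochhammer x (Suc m) = q_pochhammer x N"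
      using Suc.IH[of j] j m by simp
    have "Suc j + Suc m = Suc N"
      using j m by simp
    hence x_power: "x ^ Suc j * x ^ Suc m = x ^ Suc N"
      by (simp only: power_add[symmetric])
    have "q_binomial x (Suc N) k * q_pochhammer x k * q_pochhammer x (Suc N - k)
        = (x ^ Suc j * q_binomial x N (Suc j) + q_binomial x N j) *
          q_pochhammer x (Suc j) * q_pochhammer x (Suc m)"
      using k m by simp
    also have "\<dots> = x ^ Suc j * (1 - x ^ Suc m) *
                     (q_binomial x N (Suc j) * q_pochhammer x (Suc j) * q_pochhammer x m)
                   + (1 - x ^ Suc j) * (q_binomial x N j * q_pochhammer x j * q_pochhammer x (Suc m))"
      by (simp add: q_pochhammer_Suc[of x m] q_pochhammer_Suc[of x j] algebra_simps)
    also have "\<dots> = q_pochhammer x N * (1 - x ^ Suc j * x ^ Suc m)"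
      unfolding IH1 IH2 by (simp add: algebra_simps)
    also have "\<dots> = q_pochhammer x (Suc N)"
      by (simp only: x_power q_pochhammer_Suc)
    finally show ?thesis .
  qed (auto simp: q_binomial_eq_0)
qed simp

lemma X_power_dvd_q_binomial_mult_q_pochhammer_diff_one:
  fixes a :: nat
  assumes "0 < a" "k \<le> 2 * n"
  defines "x \<equiv> fps_X ^ a :: 'a::field fps"
  shows "fps_X ^ Suc (min k (2 * n - k)) dvd q_binomial x (2 * n) k * q_pochhammer x n - 1"
proof -
  define m where "m = min k (2 * n - k)"
  define M where "M = 2 * n - m"
  define T where "T l u = (\<Prod>i\<in>{l..<u}. 1 - x ^ Suc i)" for l u
  have mM: "m \<le> n" "n \<le> M" "M \<le> 2 * n"
    by (auto simp: m_def M_def)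
  have "q_pochhammer x k * q_pochhammer x (2 * n - k) = q_pochhammer x m * q_pochhammer x M"
    using assms(2) by (cases "k \<le> n") (auto simp: m_def M_def min_def)
  hence "q_binomial x (2 * n) k * (q_pochhammer x m * q_pochhammer x M) = q_pochhammer x (2 * n)"
    using q_binomial_mult_q_pochhammer[OF assms(2), of x] by (metis mult.assoc)
  hence "(q_binomial x (2 * n) k * q_pochhammer x n) * (q_pochhammer x m * q_pochhammer x M) =
         q_pochhammer x n * q_pochhammer x (2 * n)"
    by (simp only: mult_ac)
  also have "\<dots> = (T m n * T M (2 * n)) * (q_pochhammer x m * q_pochhammer x M)"
    unfolding T_def q_pochhammer_split[OF mM(1), of x] q_pochhammer_split[OF mM(3), of x]
    by (simp only: mult_ac)
  finally have "(q_binomial x (2 * n) k * q_pochhammer x n) * (q_pochhammer x m * q_pochhammer x M) =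
         (T m n * T M (2 * n)) * (q_pochhammer x m * q_pochhammer x M)" .
  moreover have "q_pochhammer x m * q_pochhammer x M \<noteq> 0"
    using assms(1) by (auto simp: x_def dest: arg_cong[of _ _ "\<lambda>f. f $ 0"])
  ultimately have G: "q_binomial x (2 * n) k * q_pochhammer x n = T m n * T M (2 * n)"
    by (rule mult_right_cancel[THEN iffD1, rotated])
  have "fps_X ^ Suc m dvd T m n - 1"
    unfolding T_def x_def by (rule X_power_dvd_prod_one_minus_diff_one[OF assms(1) order_refl])
  moreover have "fps_X ^ Suc m dvd T M (2 * n) - 1"
    unfolding T_def x_def using mM by (intro X_power_dvd_prod_one_minus_diff_one[OF assms(1)]) simp
  ultimately have "fps_X ^ Suc m dvd (T m n - 1) * T M (2 * n) + (T M (2 * n) - 1)"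
    by (intro dvd_add dvd_mult2)
  also have "(T m n - 1) * T M (2 * n) + (T M (2 * n) - 1) = q_binomial x (2 * n) k * q_pochhammer x n - 1"
    unfolding G by (simp add: algebra_simps)
  finally show ?thesis
    by (simp only: m_def)
qed

section \<open>Jacobi's triple product identity\<close>

definition theta_exponent :: "nat \<Rightarrow> nat \<Rightarrow> int \<Rightarrow> int" where
  "theta_exponent a b s = int a * (s * (s - 1) div 2) + int b * s"

lemma theta_exponent_double: "2 * theta_exponent a b s = int a * s * (s - 1) + 2 * int b * s"
proof -
  have "even (s * (s - 1))"
    by simp
  thus ?thesis
    by (simp add: theta_exponent_def algebra_simps)
qed

lemma theta_exponent_lower_bound:
  assumes "b \<le> a"
  shows "int a * (\<bar>s\<bar> * (\<bar>s\<bar> - 1)) \<le> 2 * theta_exponent a b s"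
proof (cases "s \<ge> 0")
  case True
  thus ?thesis
    by (simp add: theta_exponent_double algebra_simps)
next
  case False
  have "int a * (\<bar>s\<bar> * (\<bar>s\<bar> - 1)) = int a * s * (s - 1) + 2 * int a * s"
    using False by (simp add: algebra_simps)
  also have "\<dots> \<le> int a * s * (s - 1) + 2 * int b * s"
    using False assms by (simp add: mult_right_mono_neg)
  finally show ?thesis
    by (simp add: theta_exponent_double)
qed

lemma theta_exponent_nonneg:
  assumes "b \<le> a"
  shows "0 \<le> theta_exponent a b s"
proof -
  have "0 \<le> \<bar>s\<bar> * (\<bar>s\<bar> - 1)"
    by (cases "s = 0") auto
  hence "0 \<le> int a * (\<bar>s\<bar> * (\<bar>s\<bar> - 1))"
    by simp
  thus ?thesis
    using theta_exponent_lower_bound[OF assms, of s] by linarith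
qed

lemma abs_le_theta_exponent:
  assumes "0 < a" "b \<le> a"
  shows "\<bar>s\<bar> \<le> theta_exponent a b s + 1"
proof -
  define u where "u = \<bar>s\<bar>"
  have u: "0 \<le> u"
    by (simp add: u_def)
  have "u * (u - 1) \<le> int a * (u * (u - 1))"
  proof -
    have "0 \<le> u * (u - 1)"
      using u by (cases "u = 0") auto
    thus ?thesis
      using mult_right_mono[of 1 "int a" "u * (u - 1)"] assms(1) by simp
  qed
  moreover have "2 * u - 2 \<le> u * (u - 1)"
  proof -
    have "0 \<le> (u - 1) * (u - 2)"
      by (cases "u \<le> 1") (auto simp: zero_le_mult_iff)
    thus ?thesis
      by (simp add: algebra_simps)
  qed
  ultimately show ?thesis
    using theta_exponent_lower_bound[OF assms(2), of s] by (simp add: u_def)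
qed

text \<open>For 0 < a the index sets below are finite by abs_le_theta_exponent; for a = 0 the sums
  over infinite sets would be junk.\<close>

definition jacobi_theta :: "'a::field \<Rightarrow> nat \<Rightarrow> nat \<Rightarrow> 'a fps" where
  "jacobi_theta z a b = Abs_fps (\<lambda>j. \<Sum>s | theta_exponent a b s = int j. z powi s)"

lemma two_times_choose_two: "2 * int (k choose 2) = int k * (int k - 1)"
proof -
  have "even (k * (k - 1))"
    by (cases k) auto
  hence "2 * (k choose 2) = k * (k - 1)"
    by (simp add: choose_two dvd_mult_div_cancel)
  hence "2 * int (k choose 2) = int (k * (k - 1))"
    by linarith
  thus ?thesis
    by (cases k) (auto simp: algebra_simps)
qed

lemma theta_exponent_shift:
  assumes "k \<le> 2 * n" "b \<le> a * n"
  shows "int (a * (k choose 2) + (a * n - b) * (2 * n - k)) =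
         int (a * (n choose 2) + (a * n - b) * n) + theta_exponent a b (int k - int n)"
proof -
  have "2 * int (a * (k choose 2) + (a * n - b) * (2 * n - k)) =
        int a * (int k * (int k - 1)) + 2 * (int a * int n - int b) * (2 * int n - int k)"
    using assms by (simp add: of_nat_diff two_times_choose_two flip: two_times_choose_two)
  moreover have "2 * int (a * (n choose 2) + (a * n - b) * n) =
        int a * (int n * (int n - 1)) + 2 * (int a * int n - int b) * int n"
    using assms by (simp add: of_nat_diff two_times_choose_two flip: two_times_choose_two)
  ultimately show ?thesis
    using theta_exponent_double[of a b "int k - int n"] by (simp add: algebra_simps)
qed

lemma sum_lessThan_id: "(\<Sum>i<n. i) = n choose 2"
  by (induction n) (simp_all add: Suc_choose_two)

lemma jacobi_triple_product_lower_half: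
  fixes z :: "'a::field"
  assumes "z \<noteq> 0" "b \<le> a"
  shows "(\<Prod>i<n. fps_X ^ (a * n - b) + fps_const z * (fps_X ^ a) ^ i) =
         fps_const z ^ n * fps_X ^ (a * (n choose 2)) *
         (\<Prod>i<n. 1 + fps_const (inverse z) * fps_X ^ (a * i + (a - b)))"
proof -
  have factor: "fps_X ^ (a * n - b) + fps_const z * (fps_X ^ a) ^ i =
      fps_const z * fps_X ^ (a * i) * (1 + fps_const (inverse z) * fps_X ^ (a * (n - Suc i) + (a - b)))"
    if "i < n" for i
  proof -
    define e where "e = a * (n - Suc i) + (a - b)"
    have "a * (n - Suc i) + (a + a * i) = a * n"
      using that by (simp flip: add_mult_distrib2 mult_Suc_right)
    hence "a * i + e = a * n - b"
      using assms(2) unfolding e_def by linarith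
    have "fps_const z * fps_X ^ (a * i) * (1 + fps_const (inverse z) * fps_X ^ e) =
        fps_const z * fps_X ^ (a * i) + (fps_const z * fps_const (inverse z)) * (fps_X ^ (a * i) * fps_X ^ e)"
      by (simp add: algebra_simps)
    also have "fps_const z * fps_const (inverse z) = 1"
      using assms(1) by (simp flip: fps_const_mult)
    also have "fps_X ^ (a * i) * fps_X ^ e = fps_X ^ (a * n - b)"
      unfolding power_add[symmetric] \<open>a * i + e = a * n - b\<close> ..
    finally show ?thesis
      by (simp add: e_def power_mult add.commute)
  qed
  have "(\<Prod>i<n. fps_X ^ (a * n - b) + fps_const z * (fps_X ^ a) ^ i) =
      (\<Prod>i<n. fps_const z * fps_X ^ (a * i)) *
      (\<Prod>i<n. 1 + fps_const (inverse z) * fps_X ^ (a * (n - Suc i) + (a - b)))"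
    by (simp add: factor prod.distrib)
  also have "(\<Prod>i<n. 1 + fps_const (inverse z) * fps_X ^ (a * (n - Suc i) + (a - b))) =
      (\<Prod>i<n. 1 + fps_const (inverse z) * fps_X ^ (a * i + (a - b)))"
    by (rule prod.nat_diff_reindex)
  also have "(\<Prod>i<n. fps_const z * fps_X ^ (a * i)) = fps_const z ^ n * fps_X ^ (a * (n choose 2))"
    by (simp add: prod.distrib power_sum[symmetric] sum_distrib_left[symmetric] sum_lessThan_id)
  finally show ?thesis .
qed

lemma jacobi_triple_product_upper_half:
  assumes "b \<le> a * n"
  shows "(\<Prod>i<n. fps_X ^ (a * n - b) + fps_const z * (fps_X ^ a) ^ (n + i)) =
         fps_X ^ ((a * n - b) * n) * (\<Prod>i<n. 1 + fps_const z * fps_X ^ (a * i + b) :: 'a::comm_ring_1 fps)"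
proof -
  have "fps_X ^ (a * n - b) + fps_const z * (fps_X ^ a) ^ (n + i) =
        fps_X ^ (a * n - b) * (1 + fps_const z * fps_X ^ (a * i + b) :: 'a fps)" for i
  proof -
    have "a * n - b + (a * i + b) = a * (n + i)"
      using assms by (simp add: algebra_simps)
    hence X: "fps_X ^ (a * n - b) * fps_X ^ (a * i + b) = (fps_X ^ a) ^ (n + i :: nat)"
      unfolding power_add[symmetric] power_mult[symmetric] by simp
    have "fps_X ^ (a * n - b) * (1 + fps_const z * fps_X ^ (a * i + b)) =
        fps_X ^ (a * n - b) + fps_const z * (fps_X ^ (a * n - b) * fps_X ^ (a * i + b) :: 'a fps)"
      by (simp add: algebra_simps)
    thus ?thesis
      unfolding X ..
  qed
  thus ?thesis
    by (simp only: prod.distrib prod_constant card_lessThan power_mult)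
qed

lemma jacobi_triple_product_summand:
  fixes z :: "'a::field"
  assumes "z \<noteq> 0" "b \<le> a" "b \<le> a * n" "k \<le> 2 * n"
  shows "q_binomial (fps_X ^ a) (2 * n) k * (fps_X ^ a) ^ (k choose 2) * fps_const z ^ k *
           (fps_X ^ (a * n - b)) ^ (2 * n - k) =
         fps_const z ^ n * fps_X ^ (a * (n choose 2) + (a * n - b) * n) *
           (q_binomial (fps_X ^ a) (2 * n) k * fps_const (z powi (int k - int n)) *
            fps_X ^ nat (theta_exponent a b (int k - int n)))"
proof -
  define L where "L = a * (n choose 2) + (a * n - b) * n"
  have "int (a * (k choose 2) + (a * n - b) * (2 * n - k)) =
        int (L + nat (theta_exponent a b (int k - int n)))"
    using theta_exponent_shift[OF assms(4,3)] theta_exponent_nonneg[OF assms(2)] by (simp add: L_def)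
  hence "(fps_X ^ a) ^ (k choose 2) * (fps_X ^ (a * n - b)) ^ (2 * n - k) =
         fps_X ^ L * (fps_X ^ nat (theta_exponent a b (int k - int n)) :: 'a fps)"
    unfolding of_nat_eq_iff power_mult[symmetric] power_add[symmetric] by simp
  moreover have "fps_const z ^ k = fps_const z ^ n * fps_const (z powi (int k - int n))"
    using assms(1) by (simp add: power_int_diff fps_const_power flip: fps_const_mult)
  ultimately show ?thesis
    by (simp add: L_def mult_ac)
qed

lemma jacobi_triple_product_finite:
  fixes z :: "'a::field"
  assumes "z \<noteq> 0" "b \<le> a" "0 < n"
  shows "(\<Prod>i<n. (1 + fps_const z * fps_X ^ (a * i + b)) *
                    (1 + fps_const (inverse z) * fps_X ^ (a * i + (a - b)))) =
         (\<Sum>k\<le>2 * n. q_binomial (fps_X ^ a) (2 * n) k * fps_const (z powi (int k - int n)) *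
                      fps_X ^ nat (theta_exponent a b (int k - int n)))"
    (is "?D = ?S")
proof -
  define c where "c = fps_const z ^ n * fps_X ^ (a * (n choose 2) + (a * n - b) * n)"
  have "a \<le> a * n"
    using assms(3) by simp
  hence bn: "b \<le> a * n"
    using assms(2) by linarith
  \<comment> \<open>The q-binomial theorem with x = q^a, y = z, w = q^(a n - b); both sides carry the factor c.\<close>
  have "c * ?D = (\<Prod>i<2 * n. fps_X ^ (a * n - b) + fps_const z * (fps_X ^ a) ^ i)"
    unfolding mult_2 prod_lessThan_add jacobi_triple_product_lower_half[OF assms(1,2)]
      jacobi_triple_product_upper_half[OF bn]
    by (simp add: c_def power_add prod.distrib mult_ac)
  also have "\<dots> = c * ?S"
    unfolding q_binomial_theorem sum_distrib_left c_def
    by (intro sum.cong refl jacobi_triple_product_summand assms(1,2) bn) simp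
  finally show ?thesis
    using assms(1) by (simp add: c_def fps_const_power)
qed

lemma jacobi_triple_product_summand_nth:
  fixes a :: nat
  assumes "0 < a" "b \<le> a" "k \<le> 2 * n" "j < n"
  defines "x \<equiv> fps_X ^ a :: 'a::field fps" and "e \<equiv> nat (theta_exponent a b (int k - int n))"
  shows "(q_binomial x (2 * n) k * q_pochhammer x n * fps_X ^ e) $ j = (fps_X ^ e :: 'a fps) $ j"
proof (rule fps_nth_eq_if_X_power_dvd_diff)
  \<comment> \<open>The other two factors are 1 modulo q^(m + 1), and e + m + 1 \<ge> n.\<close>
  define m where "m = min k (2 * n - k)"
  have "\<bar>int k - int n\<bar> \<le> theta_exponent a b (int k - int n) + 1"
    by (rule abs_le_theta_exponent[OF assms(1,2)])
  hence "Suc j \<le> e + Suc m"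
    using assms(3,4) theta_exponent_nonneg[OF assms(2), of "int k - int n"]
    by (auto simp: e_def m_def min_def)
  hence "fps_X ^ Suc j dvd (fps_X ^ e * fps_X ^ Suc m :: 'a fps)"
    by (simp add: le_imp_power_dvd flip: power_add)
  also have "\<dots> dvd fps_X ^ e * (q_binomial x (2 * n) k * q_pochhammer x n - 1)"
    unfolding m_def x_def
    by (intro mult_dvd_mono dvd_refl X_power_dvd_q_binomial_mult_q_pochhammer_diff_one assms(1,3))
  finally show "fps_X ^ Suc j dvd q_binomial x (2 * n) k * q_pochhammer x n * fps_X ^ e - fps_X ^ e"
    by (simp add: algebra_simps)
qed

theorem jacobi_triple_product:
  fixes z :: "'a::field"
  assumes "z \<noteq> 0" "0 < a" "b \<le> a"
  shows "(\<lambda>n. (\<Prod>i<n. (1 + fps_const z * fps_X ^ (a * i + b)) *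
                         (1 + fps_const (inverse z) * fps_X ^ (a * i + (a - b)))) *
               q_pochhammer (fps_X ^ a) n)
         \<longlonglongrightarrow> jacobi_theta z a b"
proof (rule tendsto_fpsI)
  fix j
  let ?D = "\<lambda>n. \<Prod>i<n. (1 + fps_const z * fps_X ^ (a * i + b)) *
                      (1 + fps_const (inverse z) * fps_X ^ (a * i + (a - b)))"
  show "eventually (\<lambda>n. (?D n * q_pochhammer (fps_X ^ a) n) $ j = jacobi_theta z a b $ j) at_top"
    using eventually_gt_at_top[of j]
  proof eventually_elim
    case (elim n)
    define e where "e k = nat (theta_exponent a b (int k - int n))" for k
    define G where "G k = q_binomial (fps_X ^ a) (2 * n) k * q_pochhammer (fps_X ^ a :: 'a fps) n" for k
    have "?D n * q_pochhammer (fps_X ^ a) n =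
        (\<Sum>k\<le>2 * n. q_binomial (fps_X ^ a) (2 * n) k * fps_const (z powi (int k - int n)) *
                     fps_X ^ e k) * q_pochhammer (fps_X ^ a) n"
      unfolding e_def using elim assms by (subst jacobi_triple_product_finite) auto
    also have "\<dots> = (\<Sum>k\<le>2 * n. fps_const (z powi (int k - int n)) * (G k * fps_X ^ e k))"
      unfolding sum_distrib_right G_def by (simp only: mult_ac)
    finally have "?D n * q_pochhammer (fps_X ^ a) n =
        (\<Sum>k\<le>2 * n. fps_const (z powi (int k - int n)) * (G k * fps_X ^ e k))" .
    hence "(?D n * q_pochhammer (fps_X ^ a) n) $ j =
        (\<Sum>k\<le>2 * n. z powi (int k - int n) * (G k * fps_X ^ e k) $ j)"
      by (simp only: fps_sum_nth fps_mult_left_const_nth)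
    also have "\<dots> = (\<Sum>k\<le>2 * n. z powi (int k - int n) * (fps_X ^ e k :: 'a fps) $ j)"
      unfolding G_def e_def
      by (intro sum.cong refl arg_cong2[where f = times] jacobi_triple_product_summand_nth assms elim) simp
    also have "\<dots> = (\<Sum>k\<in>{k\<in>{..2 * n}. e k = j}. z powi (int k - int n))"
      by (subst sum.inter_filter) (auto intro!: sum.cong)
    also have "\<dots> = (\<Sum>s | theta_exponent a b s = int j. z powi s)"
    proof (rule sum.reindex_bij_witness[where i = "\<lambda>s. nat (s + int n)" and j = "\<lambda>k. int k - int n"])
      fix s
      assume "s \<in> {s. theta_exponent a b s = int j}"
      moreover from this have "\<bar>s\<bar> \<le> int n"
        using abs_le_theta_exponent[OF assms(2,3), of s] elim by simp
      ultimately show "int (nat (s + int n)) - int n = s" "nat (s + int n) \<in> {k\<in>{..2 * n}. e k = j}"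
        by (auto simp: e_def)
    qed (auto simp: e_def theta_exponent_nonneg[OF assms(3)])
    finally show ?case
      by (simp add: jacobi_theta_def)
  qed
qed

section \<open>Three instances of the triple product identity\<close>

lemma theta_exponent_2_1: "theta_exponent 2 1 s = s ^ 2"
  using theta_exponent_double[of 2 1 s] by (simp add: power2_eq_square algebra_simps)

lemma theta_exponent_8_0: "theta_exponent 8 0 s = 4 * s * (s - 1)"
  using theta_exponent_double[of 8 0 s] by (simp add: algebra_simps)

lemma theta_exponent_48_16: "theta_exponent 48 16 s = 8 * s * (3 * s - 1)"
  using theta_exponent_double[of 48 16 s] by (simp add: algebra_simps)

lemma f_fps_1_square_eq_jacobi_theta: "f_fps 1 ^ 2 = jacobi_theta (-1) 2 1 * f_fps 2"
proof -
  define Q where "Q n = (\<Prod>i<n. 1 - fps_X ^ (2 * i + 1) :: rat fps)" for n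
  define P where "P n = (\<Prod>i<n. (1 + fps_const (-1 :: rat) * fps_X ^ (2 * i + 1)) *
                              (1 + fps_const (inverse (-1)) * fps_X ^ (2 * i + (2 - 1)))) *
                        q_pochhammer (fps_X ^ 2) n" for n
  have "(\<lambda>n. P n * q_pochhammer (fps_X ^ 2) n) = (\<lambda>n. q_pochhammer (fps_X ^ 1) (Suc 1 * n) ^ 2)"
  proof
    fix n
    have "P n = Q n ^ 2 * q_pochhammer (fps_X ^ 2) n"
      by (simp add: P_def Q_def power2_eq_square prod.distrib fps_const_neg[symmetric])
    moreover have "q_pochhammer (fps_X ^ 1) (Suc 1 * n) = Q n * q_pochhammer (fps_X ^ 2) n"
      unfolding q_pochhammer_multisection by (simp add: Q_def numeral_2_eq_2)
    ultimately show "P n * q_pochhammer (fps_X ^ 2) n = q_pochhammer (fps_X ^ 1) (Suc 1 * n) ^ 2"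
      by (simp add: power2_eq_square mult_ac)
  qed
  moreover have "(\<lambda>n. P n * q_pochhammer (fps_X ^ 2) n) \<longlonglongrightarrow> jacobi_theta (-1) 2 1 * f_fps 2"
    unfolding P_def by (intro tendsto_fps_mult jacobi_triple_product tendsto_f_fps) simp_all
  moreover have "(\<lambda>n. q_pochhammer (fps_X ^ 1) (Suc 1 * n) ^ 2) \<longlonglongrightarrow> f_fps 1 ^ 2"
    by (intro tendsto_fps_power tendsto_f_fps_subseq) simp
  ultimately show ?thesis
    using LIMSEQ_unique by metis
qed

lemma f_fps_16_eq_jacobi_theta: "f_fps 16 = jacobi_theta (-1) 48 16"
proof -
  define P where "P n = (\<Prod>i<n. (1 + fps_const (-1 :: rat) * fps_X ^ (48 * i + 16)) *
                              (1 + fps_const (inverse (-1)) * fps_X ^ (48 * i + (48 - 16)))) *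
                        q_pochhammer (fps_X ^ 48) n" for n
  have "P = (\<lambda>n. q_pochhammer (fps_X ^ 16) (Suc 2 * n))"
    unfolding q_pochhammer_multisection
    by (simp add: fun_eq_iff P_def fps_const_neg[symmetric] numeral_2_eq_2 power_mult[symmetric] power_add[symmetric]
                  mult_ac add.commute)
  moreover have "P \<longlonglongrightarrow> jacobi_theta (-1) 48 16"
    unfolding P_def by (rule jacobi_triple_product) simp_all
  moreover have "(\<lambda>n. q_pochhammer (fps_X ^ 16) (Suc 2 * n)) \<longlonglongrightarrow> f_fps 16"
    by (rule tendsto_f_fps_subseq) simp
  ultimately show ?thesis
    using LIMSEQ_unique by metis
qed

lemma prod_one_plus_power_pairs_mult_q_pochhammer:
  "(\<Prod>i<Suc m. (1 + x ^ i) * (1 + x ^ Suc i)) * (q_pochhammer x m * q_pochhammer x (Suc m)) =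
   2 * q_pochhammer (x ^ 2) m * q_pochhammer (x ^ 2) (Suc m)"
proof -
  have "(\<Prod>i<Suc m. 1 + x ^ i) = 2 * (\<Prod>i<m. 1 + x ^ Suc i)"
    by (subst prod.lessThan_Suc_shift) simp
  thus ?thesis
    by (simp add: prod.distrib q_pochhammer_square mult_ac)
qed

lemma jacobi_theta_8_0_mult_f_fps_8: "jacobi_theta 1 8 0 * f_fps 8 = 2 * f_fps 16 ^ 2"
proof -
  define y where "y = (fps_X ^ 8 :: rat fps)"
  define P where "P n = (\<Prod>i<n. (1 + fps_const (1 :: rat) * fps_X ^ (8 * i + 0)) *
                              (1 + fps_const (inverse 1) * fps_X ^ (8 * i + (8 - 0)))) *
                        q_pochhammer (fps_X ^ 8) n" for n
  have "(1 + fps_const 1 * fps_X ^ (8 * i + 0)) * (1 + fps_const (inverse 1) * fps_X ^ (8 * i + (8 - 0))) =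
        (1 + y ^ i) * (1 + y ^ Suc i)" for i
  proof -
    have "8 * i + (8 - 0) = 8 * Suc i" "8 * i + 0 = 8 * i"
      by simp_all
    thus ?thesis
      by (simp only: y_def power_mult fps_const_1_eq_1 inverse_1 mult_1_left)
  qed
  hence "P (Suc m) * q_pochhammer y m =
         (\<Prod>i<Suc m. (1 + y ^ i) * (1 + y ^ Suc i)) * (q_pochhammer y m * q_pochhammer y (Suc m))" for m
    unfolding P_def y_def[symmetric] by (simp only: mult_ac)
  hence "P (Suc m) * q_pochhammer y m = 2 * q_pochhammer (y ^ 2) m * q_pochhammer (y ^ 2) (Suc m)" for m
    by (simp only: prod_one_plus_power_pairs_mult_q_pochhammer)
  hence eq: "(\<lambda>m. P (Suc m) * q_pochhammer y m) =
             (\<lambda>m. 2 * q_pochhammer (y ^ 2) m * q_pochhammer (y ^ 2) (Suc m))"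
    by (rule ext)
  have P: "P \<longlonglongrightarrow> jacobi_theta 1 8 0"
    unfolding P_def by (rule jacobi_triple_product) simp_all
  have q8: "q_pochhammer y \<longlonglongrightarrow> f_fps 8" and q16: "q_pochhammer (y ^ 2) \<longlonglongrightarrow> f_fps 16"
    unfolding y_def power_mult[symmetric] by (simp_all add: tendsto_f_fps)
  have "(\<lambda>m. P (Suc m) * q_pochhammer y m) \<longlonglongrightarrow> jacobi_theta 1 8 0 * f_fps 8"
    by (intro tendsto_fps_mult LIMSEQ_Suc[OF P] q8)
  moreover have "(\<lambda>m. 2 * q_pochhammer (y ^ 2) m * q_pochhammer (y ^ 2) (Suc m))
                   \<longlonglongrightarrow> 2 * f_fps 16 * f_fps 16"
    by (intro tendsto_fps_mult tendsto_const q16 LIMSEQ_Suc[OF q16])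
  ultimately have "jacobi_theta 1 8 0 * f_fps 8 = 2 * f_fps 16 * f_fps 16"
    unfolding eq by (rule LIMSEQ_unique)
  thus ?thesis
    by (simp add: power2_eq_square mult_ac)
qed

lemma fps_even_jacobi_theta_2_1_plus_X_jacobi_theta_8_0:
  "fps_even (jacobi_theta (-1) 2 1 + fps_X * jacobi_theta 1 8 0 :: rat fps)"
  unfolding fps_even_def
proof (intro allI impI)
  fix j :: nat
  assume "odd j"
  then obtain i where j: "j = Suc i" and "even i"
    by (cases j) auto
  define S where "S = {s. s ^ 2 = int j}"
  define T where "T = {t. 4 * t * (t - 1) = int i}"
  have "(\<Sum>s\<in>S. (-1 :: rat) powi s) = (\<Sum>t\<in>T. - 1)"
  proof (rule sum.reindex_bij_witness[where i = "\<lambda>t. 2 * t - 1" and j = "\<lambda>s. (s + 1) div 2"])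
    fix s
    assume "s \<in> S"
    moreover from this have "odd (s ^ 2)"
      using \<open>odd j\<close> by (simp add: S_def)
    hence "odd s"
      by simp
    then obtain t where s: "s = 2 * t + 1"
      by (rule oddE)
    ultimately show "2 * ((s + 1) div 2) - 1 = s" "(s + 1) div 2 \<in> T" "- 1 = (-1 :: rat) powi s"
      using \<open>odd s\<close> by (auto simp: S_def T_def j power2_eq_square algebra_simps)
  next
    fix t
    assume "t \<in> T"
    thus "(2 * t - 1 + 1) div 2 = t" "2 * t - 1 \<in> S"
      by (auto simp: S_def T_def j power2_eq_square algebra_simps)
  qed
  hence "(\<Sum>s\<in>S. (-1 :: rat) powi s) + (\<Sum>t\<in>T. 1 powi t) = 0"
    by (simp add: sum_negf)
  thus "(jacobi_theta (-1) 2 1 + fps_X * jacobi_theta 1 8 0 :: rat fps) $ j = 0"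
    unfolding jacobi_theta_def theta_exponent_2_1 theta_exponent_8_0
    by (simp add: fps_X_mult_nth j S_def T_def)
qed

section \<open>The congruence for d_7\<close>

lemma f_fps_8_mult_f_fps_2_power_4_cong: "fps_cong 2 (f_fps 8 * f_fps 2 ^ 4) (f_fps 16)"
proof -
  have "fps_cong 2 ((f_fps 2 ^ 2) ^ 2) (f_fps 4 ^ 2)"
    using f_fps_square_cong[of 2] by (intro fps_cong_power) (simp_all add: integral_fps_power)
  hence "fps_cong 2 (f_fps 2 ^ 4) (f_fps 8)"
    using f_fps_square_cong[of 4] by (auto simp flip: power_mult intro: fps_cong_trans)
  hence "fps_cong 2 (f_fps 8 * f_fps 2 ^ 4) (f_fps 8 ^ 2)"
    by (simp add: fps_cong_mult_left power2_eq_square)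
  thus ?thesis
    using f_fps_square_cong[of 8] by (auto intro: fps_cong_trans)
qed

lemma d7_cong_jacobi_theta:
  "fps_cong 4 (f_fps 2 ^ 7 * inverse (f_fps 1) ^ 22) (jacobi_theta (-1) 2 1 * inverse (f_fps 2) ^ 4)"
proof -
  define U where "U = inverse (f_fps 1)"
  define V where "V = inverse (f_fps 2)"
  have U: "f_fps 1 * U = 1" and V: "f_fps 2 * V = 1"
    by (simp_all add: U_def V_def inverse_mult_eq_1')
  have "fps_cong 4 ((f_fps 1 ^ 2) ^ 2) (f_fps 2 ^ 2)"
    using f_fps_square_cong[of 1] by (intro fps_cong_square) simp_all
  hence "fps_cong 4 ((f_fps 1 ^ 4) ^ 6) ((f_fps 2 ^ 2) ^ 6)"
    by (intro fps_cong_power) (simp_all add: integral_fps_power flip: power_mult)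
  hence "fps_cong 4 (inverse ((f_fps 1 ^ 4) ^ 6)) (inverse ((f_fps 2 ^ 2) ^ 6))"
    by (intro fps_cong_inverse) (simp_all add: integral_fps_power fps_nth_power_0)
  hence cong: "fps_cong 4 (f_fps 1 ^ 2 * f_fps 2 ^ 7 * U ^ 24) (f_fps 1 ^ 2 * f_fps 2 ^ 7 * V ^ 12)"
    by (intro fps_cong_mult_left)
       (simp_all add: U_def V_def integral_fps_mult integral_fps_power fps_inverse_power flip: power_mult)
  have e1: "f_fps 1 ^ 2 * f_fps 2 ^ 7 * U ^ 24 = f_fps 2 ^ 7 * U ^ 22 * (f_fps 1 * U) ^ 2"
    by (simp add: power_mult_distrib mult_ac flip: power_add)
  have e2: "f_fps 1 ^ 2 * f_fps 2 ^ 7 * V ^ 12 = f_fps 1 ^ 2 * V ^ 5 * (f_fps 2 * V) ^ 7"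
    by (simp add: power_mult_distrib mult_ac flip: power_add)
  have e3: "f_fps 1 ^ 2 * V ^ 5 = jacobi_theta (-1) 2 1 * V ^ 4 * (f_fps 2 * V)"
    unfolding f_fps_1_square_eq_jacobi_theta power_add[of V 4 1, simplified] by (simp only: mult_ac)
  show ?thesis
    using cong unfolding U_def[symmetric] V_def[symmetric] e1 e2 e3 U V by simp
qed

lemma jacobi_theta_8_0_cong: "fps_cong 4 (jacobi_theta 1 8 0 * inverse (f_fps 2) ^ 4) (2 * f_fps 16)"
proof -
  define W where "W = f_fps 16 ^ 2 * inverse (f_fps 8) * inverse (f_fps 2) ^ 4"
  have W_int: "integral_fps W"
    unfolding W_def by (intro integral_fps_mult integral_fps_power integral_fps_inverse) simp_all
  have "W * (f_fps 8 * f_fps 2 ^ 4) = f_fps 16 * f_fps 16"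
    by (simp add: W_def power2_eq_square inverse_mult_eq_1' power_mult_distrib[symmetric] mult_ac)
  hence "fps_cong 2 (W * f_fps 16) (f_fps 16 * f_fps 16)"
    using fps_cong_mult_left[OF W_int fps_cong_sym[OF f_fps_8_mult_f_fps_2_power_4_cong]] by simp
  hence "fps_cong 2 W (f_fps 16)"
    by (rule fps_cong_cancel) simp_all
  hence "fps_cong (2 * 2) (of_int 2 * W) (of_int 2 * f_fps 16)"
    by (rule fps_cong_scale)
  moreover have "jacobi_theta 1 8 0 * inverse (f_fps 2) ^ 4 = 2 * W"
  proof -
    have "jacobi_theta 1 8 0 = jacobi_theta 1 8 0 * f_fps 8 * inverse (f_fps 8)"
      by (simp add: inverse_mult_eq_1' mult.assoc)
    also have "\<dots> = 2 * f_fps 16 ^ 2 * inverse (f_fps 8)"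
      by (simp only: jacobi_theta_8_0_mult_f_fps_8)
    finally show ?thesis
      by (simp add: W_def mult_ac)
  qed
  ultimately show ?thesis
    by simp
qed

lemma d7_odd_coefficient:
  assumes "\<And>s::int. 4 * s * (3 * s - 1) \<noteq> int M"
  shows "\<exists>z::int. d 7 (2 * M + 1) = 4 * of_int z"
proof -
  define V where "V = inverse (f_fps 2)"
  define E where "E = (jacobi_theta (-1) 2 1 + fps_X * jacobi_theta 1 8 0) * V ^ 4"
  have "fps_cong 4 (fps_X * (jacobi_theta 1 8 0 * V ^ 4)) (fps_X * (2 * f_fps 16))"
    unfolding V_def by (intro fps_cong_mult_left jacobi_theta_8_0_cong) simp
  hence "fps_cong 4 (E - fps_X * (jacobi_theta 1 8 0 * V ^ 4)) (E - fps_X * (2 * f_fps 16))"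
    by (rule fps_cong_diff[OF fps_cong_refl])
  moreover have "E - fps_X * (jacobi_theta 1 8 0 * V ^ 4) = jacobi_theta (-1) 2 1 * V ^ 4"
    by (simp add: E_def algebra_simps)
  ultimately have "fps_cong 4 (jacobi_theta (-1) 2 1 * V ^ 4) (E - fps_X * (2 * f_fps 16))"
    by simp
  hence "fps_cong 4 (f_fps 2 ^ 7 * inverse (f_fps 1) ^ 22) (E - fps_X * (2 * f_fps 16))"
    using fps_cong_trans[OF d7_cong_jacobi_theta] unfolding V_def by blast
  then obtain z where z: "(f_fps 2 ^ 7 * inverse (f_fps 1) ^ 22) $ (2 * M + 1) =
      (E - fps_X * (2 * f_fps 16)) $ (2 * M + 1) + of_int 4 * of_int z"
    using fps_cong_nth by blast
  moreover have "fps_even E"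
    unfolding E_def V_def
    using fps_even_f_fps[of 1]
    by (intro fps_even_mult fps_even_jacobi_theta_2_1_plus_X_jacobi_theta_8_0 fps_even_power
        fps_even_inverse) simp
  moreover have "f_fps 16 $ (2 * M) = 0"
  proof -
    have "{s. theta_exponent 48 16 s = int (2 * M)} = {}"
      using assms by (auto simp: theta_exponent_48_16 mult.assoc)
    thus ?thesis
      by (simp add: f_fps_16_eq_jacobi_theta jacobi_theta_def)
  qed
  ultimately have "d 7 (2 * M + 1) = 4 * of_int z"
    using z by (simp add: d_def fps_inverse_power fps_even_def fps_X_mult_nth numeral_fps_const)
  thus ?thesis ..
qed

lemma nonresidue_imp_not_eq_pentagonal:
  fixes p r n :: nat
  assumes "Legendre (int (3 * r + 1)) (int p) = -1"
  shows "4 * s * (3 * s - 1) \<noteq> int (p * n + r)"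
proof
  assume eq: "4 * s * (3 * s - 1) = int (p * n + r)"
  have "(6 * s - 1) ^ 2 = 3 * (4 * s * (3 * s - 1)) + 1"
    by (simp add: power2_eq_square algebra_simps)
  also have "\<dots> = int (3 * r + 1) + int p * (3 * int n)"
    unfolding eq by (simp add: algebra_simps)
  finally have "[(6 * s - 1) ^ 2 = int (3 * r + 1)] (mod int p)"
    by (simp add: cong_def)
  hence "QuadRes (int p) (int (3 * r + 1))"
    unfolding QuadRes_def by blast
  thus False
    using assms by (simp add: Legendre_def split: if_splits)
qed

theorem theorem3p5:
  fixes p :: nat and r :: nat
  assumes "prime p" and "p \<ge> 5"
    and "1 \<le> r" and "r \<le> p - 1"
    and "Legendre (int (3 * r + 1)) (int p) = -1"
  shows "\<forall>n::nat. \<exists>z::int. d 7 (2 * p * n + 2 * r + 1) = 4 * of_int z"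
proof
  fix n :: nat
  have "\<exists>z::int. d 7 (2 * (p * n + r) + 1) = 4 * of_int z"
    by (rule d7_odd_coefficient) (rule nonresidue_imp_not_eq_pentagonal[OF assms(5)])
  thus "\<exists>z::int. d 7 (2 * p * n + 2 * r + 1) = 4 * of_int z"
    by (simp add: algebra_simps)
qed

end
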